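(* Let $C$ be a parity complex. For all $u,v,x\in C$, if $u\lhd v$ and $v\in x^+$, then $u^-\cap x^{-+}=\emptyset$.
   Context: A parity complex consists of a set $C=\bigsqcup_{n\ge 0}C_n$ graded by dimension, together with, for each $n\ge 0$ and each $x\in C_{n+1}$, two disjoint, non-empty, finite subsets $x^-,x^+\subseteq C_n$ (for $x\in C_0$ put $x^-=x^+=\emptyset$), subject to Axioms 1, 2, 3A, 3B below. Notation: for $S\subseteq C$, $S^-=\bigcup_{w\in S}w^-$ and $S^+=\bigcup_{w\in S}w^+$; iterated faces are written $x^{-+}=(x^-)^+$, etc. For $S,T\subseteq C$ write $S\perp T$ when $S^-\cap T^-=\emptyset$ and $S^+\cap T^+=\emptyset$; $x\perp y$ means $\{x\}\perp\{y\}$. With $S_n=S\cap C_n$, a set $S$ is well-formed when $S_0$ has at most one element and for every $n>0$ and all distinct $x,y\in S_n$, $x\perp y$. Write $x<y$ when $x^+\cap y^-\neq\emptyset$, and let $\lhd$ be the reflexive transitive closure of $<$. Axioms: (1) for all $x$, $x^{++}\cup x^{--}=x^{-+}\cup x^{+-}$; (2) for all $x$, $x^-$ and $x^+$ are well-formed; (3A) $x\lhd y$ and $y\lhd x$ imply $x=y$; (3B) if $x\lhd y$ then there is no $z\in C$ with $x\in z^+$ and $y\in z^-$, and no $z\in C$ with $y\in z^+$ and $x\in z^-$. *)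

theory Defs
  imports Main
begin

text \<open>A parity complex is given by a carrier set C, a grading dim (so C_n = {x \<in> C. dim x = n}),
  and face maps mi (x^-) and pl (x^+).\<close>

definition grade :: "'a set \<Rightarrow> ('a \<Rightarrow> nat) \<Rightarrow> nat \<Rightarrow> 'a set" where
  "grade S dim n = {x \<in> S. dim x = n}"

definition setfaces :: "('a \<Rightarrow> 'a set) \<Rightarrow> 'a set \<Rightarrow> 'a set" where
  "setfaces f S = (\<Union>w\<in>S. f w)"

definition perp :: "('a \<Rightarrow> 'a set) \<Rightarrow> ('a \<Rightarrow> 'a set) \<Rightarrow> 'a set \<Rightarrow> 'a set \<Rightarrow> bool" where
  "perp mi pl S T \<longleftrightarrow> setfaces mi S \<inter> setfaces mi T = {} \<and> setfaces pl S \<inter> setfaces pl T = {}"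

definition well_formed :: "('a \<Rightarrow> nat) \<Rightarrow> ('a \<Rightarrow> 'a set) \<Rightarrow> ('a \<Rightarrow> 'a set) \<Rightarrow> 'a set \<Rightarrow> bool" where
  "well_formed dim mi pl S \<longleftrightarrow>
     (\<forall>a\<in>grade S dim 0. \<forall>b\<in>grade S dim 0. a = b) \<and>
     (\<forall>n>0. \<forall>x\<in>grade S dim n. \<forall>y\<in>grade S dim n. x \<noteq> y \<longrightarrow> perp mi pl {x} {y})"

definition pc_less :: "'a set \<Rightarrow> ('a \<Rightarrow> 'a set) \<Rightarrow> ('a \<Rightarrow> 'a set) \<Rightarrow> 'a \<Rightarrow> 'a \<Rightarrow> bool" where
  "pc_less C mi pl x y \<longleftrightarrow> x \<in> C \<and> y \<in> C \<and> pl x \<inter> mi y \<noteq> {}"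

definition pc_tri :: "'a set \<Rightarrow> ('a \<Rightarrow> 'a set) \<Rightarrow> ('a \<Rightarrow> 'a set) \<Rightarrow> 'a \<Rightarrow> 'a \<Rightarrow> bool" where
  "pc_tri C mi pl = (pc_less C mi pl)\<^sup>*\<^sup>*"

definition parity_complex :: "'a set \<Rightarrow> ('a \<Rightarrow> nat) \<Rightarrow> ('a \<Rightarrow> 'a set) \<Rightarrow> ('a \<Rightarrow> 'a set) \<Rightarrow> bool" where
  "parity_complex C dim mi pl \<longleftrightarrow>
     \<comment> \<open>face data\<close>
     (\<forall>x\<in>C. dim x = 0 \<longrightarrow> mi x = {} \<and> pl x = {}) \<and>
     (\<forall>n. \<forall>x\<in>grade C dim (Suc n).
        mi x \<subseteq> grade C dim n \<and> pl x \<subseteq> grade C dim n \<and>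
        mi x \<noteq> {} \<and> pl x \<noteq> {} \<and> finite (mi x) \<and> finite (pl x) \<and> mi x \<inter> pl x = {}) \<and>
     \<comment> \<open>Axiom 1\<close>
     (\<forall>x\<in>C. setfaces pl (pl x) \<union> setfaces mi (mi x) = setfaces pl (mi x) \<union> setfaces mi (pl x)) \<and>
     \<comment> \<open>Axiom 2\<close>
     (\<forall>x\<in>C. well_formed dim mi pl (mi x) \<and> well_formed dim mi pl (pl x)) \<and>
     \<comment> \<open>Axiom 3A\<close>
     (\<forall>x\<in>C. \<forall>y\<in>C. pc_tri C mi pl x y \<and> pc_tri C mi pl y x \<longrightarrow> x = y) \<and>
     \<comment> \<open>Axiom 3B\<close>
     (\<forall>x\<in>C. \<forall>y\<in>C. pc_tri C mi pl x y \<longrightarrow>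
        \<not> (\<exists>z\<in>C. x \<in> pl z \<and> y \<in> mi z) \<and> \<not> (\<exists>z\<in>C. y \<in> pl z \<and> x \<in> mi z))"

end

theory Submission
  imports Defs
begin

text \<open>If \<open>u\<^sup>-\<close> met \<open>y\<^sup>+\<close> for some \<open>y \<in> x\<^sup>-\<close>, then \<open>y < u \<lhd> v\<close>, so \<open>y \<lhd> v\<close>
  with \<open>y \<in> x\<^sup>-\<close> and \<open>v \<in> x\<^sup>+\<close>, which Axiom 3B forbids.\<close>

lemma parity_complex_faces_subset:
  assumes "parity_complex C dim mi pl" and "x \<in> C"
  shows "mi x \<subseteq> C" and "pl x \<subseteq> C"
proof -
  have "mi x \<subseteq> C \<and> pl x \<subseteq> C"
  proof (cases "dim x")
    case 0
    then show ?thesis using assms unfolding parity_complex_def by auto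
  next
    case (Suc n)
    then have "x \<in> grade C dim (Suc n)" using assms(2) by (simp add: grade_def)
    then have "mi x \<subseteq> grade C dim n \<and> pl x \<subseteq> grade C dim n"
      using assms(1) unfolding parity_complex_def by blast
    then show ?thesis by (auto simp: grade_def)
  qed
  then show "mi x \<subseteq> C" and "pl x \<subseteq> C" by auto
qed

lemma parity_complex_not_tri_minus_plus:
  assumes "parity_complex C dim mi pl" and "x \<in> C"
    and "y \<in> mi x" and "v \<in> pl x"
  shows "\<not> pc_tri C mi pl y v"
  using assms parity_complex_faces_subset[OF assms(1,2)]
  unfolding parity_complex_def by blast

theorem proposition1p2:
  fixes C :: "'a set" and dim :: "'a \<Rightarrow> nat" and mi pl :: "'a \<Rightarrow> 'a set"
  assumes "parity_complex C dim mi pl"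
    and "u \<in> C" and "v \<in> C" and "x \<in> C"
    and "pc_tri C mi pl u v" and "v \<in> pl x"
  shows "mi u \<inter> setfaces pl (mi x) = {}"
proof (rule ccontr)
  assume "mi u \<inter> setfaces pl (mi x) \<noteq> {}"
  then obtain w y where "w \<in> mi u" and y: "y \<in> mi x" and "w \<in> pl y"
    unfolding setfaces_def by blast
  moreover have "y \<in> C"
    using parity_complex_faces_subset(1)[OF assms(1,4)] y by blast
  ultimately have "pc_less C mi pl y u"
    using assms(2) unfolding pc_less_def by blast
  then have "pc_tri C mi pl y v"
    using assms(5) unfolding pc_tri_def by (rule converse_rtranclp_into_rtranclp)
  then show False
    using parity_complex_not_tri_minus_plus[OF assms(1,4) y assms(6)] by contradiction
qed

end
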